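(* Let $X$ be a finite q-cycle set and suppose that the subgroup of $\mathrm{Sym}(X)$ generated by $\{\mathfrak{q},\mathfrak{q}'\}$ acts transitively on $X$. Then $X$ is irreducible.
   Context: A q-cycle set is a non-empty set $X$ with operations $\cdot,:$ such that each $y\mapsto x\cdot y$ is bijective and $(x\cdot y)\cdot(x\cdot z)=(y:x)\cdot(y\cdot z)$, $(x:y):(x:z)=(y\cdot x):(y:z)$, $(x\cdot y):(x\cdot z)=(y:x)\cdot(y:z)$ for all $x,y,z$. The squaring maps are $\mathfrak{q}(x):=x\cdot x$, $\mathfrak{q}'(x):=x:x$ (the hypothesis presupposes they are permutations of $X$). A sub-q-cycle set is a subset that is a q-cycle set under the restricted operations (the empty set also counts); $X$ is irreducible if $\emptyset$ and $X$ are its only sub-q-cycle sets. *)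

theory Defs
  imports "HOL-Algebra.Bij" "HOL-Algebra.Generated_Groups"
begin

definition q_cycle_set :: "'a set \<Rightarrow> ('a \<Rightarrow> 'a \<Rightarrow> 'a) \<Rightarrow> ('a \<Rightarrow> 'a \<Rightarrow> 'a) \<Rightarrow> bool" where
  "q_cycle_set X dot col \<longleftrightarrow>
     X \<noteq> {} \<and>
     (\<forall>x\<in>X. \<forall>y\<in>X. dot x y \<in> X \<and> col x y \<in> X) \<and>
     (\<forall>x\<in>X. bij_betw (dot x) X X) \<and>
     (\<forall>x\<in>X. \<forall>y\<in>X. \<forall>z\<in>X.
        dot (dot x y) (dot x z) = dot (col y x) (dot y z) \<and>
        col (col x y) (col x z) = col (dot y x) (col y z) \<and>
        col (dot x y) (dot x z) = dot (col y x) (col y z))"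

definition sub_q_cycle_set :: "'a set \<Rightarrow> ('a \<Rightarrow> 'a \<Rightarrow> 'a) \<Rightarrow> ('a \<Rightarrow> 'a \<Rightarrow> 'a) \<Rightarrow> 'a set \<Rightarrow> bool" where
  "sub_q_cycle_set X dot col Y \<longleftrightarrow> Y \<subseteq> X \<and> (Y = {} \<or> q_cycle_set Y dot col)"

definition irreducible_qcs :: "'a set \<Rightarrow> ('a \<Rightarrow> 'a \<Rightarrow> 'a) \<Rightarrow> ('a \<Rightarrow> 'a \<Rightarrow> 'a) \<Rightarrow> bool" where
  "irreducible_qcs X dot col \<longleftrightarrow>
     (\<forall>Y. sub_q_cycle_set X dot col Y \<longrightarrow> Y = {} \<or> Y = X)"

text \<open>Squaring maps, as elements of Sym(X) (extensional functions on X).\<close>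
definition sq_dot :: "'a set \<Rightarrow> ('a \<Rightarrow> 'a \<Rightarrow> 'a) \<Rightarrow> 'a \<Rightarrow> 'a" where
  "sq_dot X dot = (\<lambda>x\<in>X. dot x x)"

definition sq_col :: "'a set \<Rightarrow> ('a \<Rightarrow> 'a \<Rightarrow> 'a) \<Rightarrow> 'a \<Rightarrow> 'a" where
  "sq_col X col = (\<lambda>x\<in>X. col x x)"

end

theory Submission
  imports Defs
begin

text \<open>A nonempty sub-q-cycle set Y is closed under squaring, and on a finite set an injective
  self-map of X sending Y into Y permutes Y. So both squaring maps lie in the setwise stabilizer
  of Y in Sym(X), hence so does the group they generate; by transitivity Y = X.\<close>

definition set_stabilizer :: "'a set \<Rightarrow> 'a set \<Rightarrow> ('a \<Rightarrow> 'a) set" where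
  "set_stabilizer X Y = {g \<in> Bij X. g ` Y = Y}"

lemma subgroup_set_stabilizer:
  assumes "Y \<subseteq> X"
  shows "subgroup (set_stabilizer X Y) (BijGroup X)"
proof (rule subgroup.intro)
  show "set_stabilizer X Y \<subseteq> carrier (BijGroup X)"
    by (auto simp: set_stabilizer_def BijGroup_def)
next
  fix g h assume g: "g \<in> set_stabilizer X Y" and h: "h \<in> set_stabilizer X Y"
  then have "compose X g h ` Y = g ` h ` Y"
    using assms by (auto simp: compose_def subset_eq)
  with g h show "g \<otimes>\<^bsub>BijGroup X\<^esub> h \<in> set_stabilizer X Y"
    by (simp add: set_stabilizer_def BijGroup_def compose_Bij)
next
  have "(\<lambda>x\<in>X. x) ` Y = Y"
    using assms by (auto simp: subset_eq)
  then show "\<one>\<^bsub>BijGroup X\<^esub> \<in> set_stabilizer X Y"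
    by (simp add: set_stabilizer_def BijGroup_def id_Bij)
next
  fix g assume g: "g \<in> set_stabilizer X Y"
  then have "bij_betw g X X" and "g ` Y = Y"
    by (auto simp: set_stabilizer_def Bij_def)
  then have "inv_into X g ` Y = Y"
    using assms by (metis bij_betw_imp_inj_on inv_into_image_cancel)
  then have "(\<lambda>x\<in>X. inv_into X g x) ` Y = Y"
    using assms by (auto simp: subset_eq)
  with g show "inv\<^bsub>BijGroup X\<^esub> g \<in> set_stabilizer X Y"
    by (simp add: set_stabilizer_def inv_BijGroup restrict_inv_into_Bij)
qed

lemma transitive_generate_stable_subset_eq:
  assumes trans: "\<forall>x\<in>X. \<forall>y\<in>X. \<exists>g\<in>generate (BijGroup X) S. g x = y"
    and "S \<subseteq> set_stabilizer X Y" and "Y \<subseteq> X" and "Y \<noteq> {}"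
  shows "Y = X"
proof -
  have stab: "generate (BijGroup X) S \<subseteq> set_stabilizer X Y"
    using assms by (intro group.generate_subgroup_incl group_BijGroup subgroup_set_stabilizer)
  obtain y where y: "y \<in> Y" using \<open>Y \<noteq> {}\<close> by blast
  have "x \<in> Y" if "x \<in> X" for x
  proof -
    obtain g where "g \<in> generate (BijGroup X) S" "g y = x"
      using trans y \<open>x \<in> X\<close> \<open>Y \<subseteq> X\<close> by blast
    with stab y show "x \<in> Y" by (force simp: set_stabilizer_def)
  qed
  with \<open>Y \<subseteq> X\<close> show ?thesis by blast
qed

lemma restrict_in_set_stabilizer:
  assumes "bij_betw f X X" and "finite X" and "Y \<subseteq> X" and "f ` Y \<subseteq> Y"
  shows "restrict f X \<in> set_stabilizer X Y"
proof -
  have "inj_on f Y"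
    using assms(1,3) bij_betw_imp_inj_on inj_on_subset by blast
  then have "f ` Y = Y"
    by (rule endo_inj_surj[OF finite_subset[OF assms(3,2)] assms(4)])
  moreover have "restrict f X ` Y = f ` Y"
    using assms(3) by (intro image_cong) auto
  ultimately have "restrict f X ` Y = Y"
    by simp
  moreover have "restrict f X \<in> Bij X"
    using assms(1) by (simp add: Bij_def)
  ultimately show ?thesis
    by (simp add: set_stabilizer_def)
qed

lemma q_cycle_set_squares_closed:
  assumes "q_cycle_set Y dot col" and "x \<in> Y"
  shows "dot x x \<in> Y" and "col x x \<in> Y"
  using assms by (auto simp: q_cycle_set_def)

theorem mainTheorem16:
  fixes X :: "'a set" and dot col :: "'a \<Rightarrow> 'a \<Rightarrow> 'a"
  assumes "q_cycle_set X dot col"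
    and "finite X"
    and "bij_betw (\<lambda>x. dot x x) X X"
    and "bij_betw (\<lambda>x. col x x) X X"
    and "\<forall>x\<in>X. \<forall>y\<in>X. \<exists>g\<in>generate (BijGroup X) {sq_dot X dot, sq_col X col}. g x = y"
  shows "irreducible_qcs X dot col"
  unfolding irreducible_qcs_def
proof (intro allI impI)
  fix Y assume "sub_q_cycle_set X dot col Y"
  then have "Y \<subseteq> X" and "Y = {} \<or> q_cycle_set Y dot col"
    by (auto simp: sub_q_cycle_set_def)
  show "Y = {} \<or> Y = X"
  proof (cases "Y = {}")
    case False
    with \<open>Y = {} \<or> q_cycle_set Y dot col\<close> have "q_cycle_set Y dot col" by simp
    have "dot x x \<in> Y" "col x x \<in> Y" if "x \<in> Y" for x
      using q_cycle_set_squares_closed[OF \<open>q_cycle_set Y dot col\<close> that] .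
    then have "restrict (\<lambda>x. dot x x) X \<in> set_stabilizer X Y"
      and "restrict (\<lambda>x. col x x) X \<in> set_stabilizer X Y"
      using assms(2-4) \<open>Y \<subseteq> X\<close> by (blast intro: restrict_in_set_stabilizer)+
    then have "{sq_dot X dot, sq_col X col} \<subseteq> set_stabilizer X Y"
      by (simp add: sq_dot_def sq_col_def)
    from assms(5) this \<open>Y \<subseteq> X\<close> False have "Y = X"
      by (rule transitive_generate_stable_subset_eq)
    then show ?thesis by simp
  qed simp
qed

end
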